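(* Let $\mathcal G=\mathfrak g_1\oplus\mathfrak g_2$ and $f,g\in C^*_{\mathsf{LTS}}(\mathcal G,\mathcal G)$ homogeneous. If $\|f\|=-1|l$ and $\|g\|=-1|k$, or if $\|f\|=l|-1$ and $\|g\|=k|-1$, then $[f,g]_{\mathsf{LTS}}=0$.
   Context: All vector spaces are over a field of characteristic $0$. Cochains: $C^p(\mathcal G,\mathcal G)=\mathrm{Hom}(\otimes^{2p+1}\mathcal G,\mathcal G)$, arguments $(\mathfrak X_1,\dots,\mathfrak X_p,x)$, $\mathfrak X_i=x_i\otimes y_i$; for $P\in C^p,Q\in C^q$, $(P\circ Q)(\mathfrak X_1,\dots,\mathfrak X_{p+q},x)=\sum_{k=1}^p(-1)^{(k-1)q}\sum_{\sigma\in\mathbb S(k-1,q)}(-1)^\sigma P(\mathfrak X_{\sigma(1)},\dots,\mathfrak X_{\sigma(k-1)},Q(\mathfrak X_{\sigma(k)},\dots,\mathfrak X_{\sigma(k+q-1)},x_{k+q})\otimes y_{k+q},\mathfrak X_{k+q+1},\dots,x)+\sum_{k=1}^p(-1)^{(k-1)q}\sum_{\sigma\in\mathbb S(k-1,q)}(-1)^\sigma P(\mathfrak X_{\sigma(1)},\dots,\mathfrak X_{\sigma(k-1)},x_{k+q}\otimes Q(\mathfrak X_{\sigma(k)},\dots,\mathfrak X_{\sigma(k+q-1)},y_{k+q}),\mathfrak X_{k+q+1},\dots,x)+\sum_{\sigma\in\mathbb S(p,q)}(-1)^\sigma P(\mathfrak X_{\sigma(1)},\dots,\mathfrak X_{\sigma(p)},Q(\mathfrak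 X_{\sigma(p+1)},\dots,\mathfrak X_{\sigma(p+q)},x))$ ($\mathbb S$ = shuffles), $[P,Q]=P\circ Q-(-1)^{pq}Q\circ P$; $C^p_{\mathsf{LTS}}$ is the subspace of $P$ with $P(\dots,x,x,y)=0$ and vanishing cyclic sum in the last three slots, with restricted bracket $[\cdot,\cdot]_{\mathsf{LTS}}$. Bidegree: $\mathfrak g^{a,b}\subset\otimes^{a+b}\mathcal G$ is the sum of all tensor products with exactly $a$ factors $\mathfrak g_1$ and $b$ factors $\mathfrak g_2$; $f\in C^p_{\mathsf{LTS}}$ has bidegree $l|k$ ($l+k=2p$) if $f(\mathfrak g^{l+1,k})\subset\mathfrak g_1$, $f(\mathfrak g^{l,k+1})\subset\mathfrak g_2$, and $f$ vanishes on all other $\mathfrak g^{a,b}$. *)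

theory Defs
  imports Complex_Main "HOL-Combinatorics.Permutations"
begin

type_synonym 'v cochain = "('v \<times> 'v) list \<Rightarrow> 'v \<Rightarrow> 'v"
  (* P Xs x  represents  P(X_1,...,X_p,x)  with  Xs = [(x_1,y_1),...,(x_p,y_p)],
     i.e. the value on the pure tensor x_1 (x) y_1 (x) ... (x) x_p (x) y_p (x) x *)

text \<open>Multilinear maps from the (2p+1)-fold tensor power of G to G, i.e. C^p(G,G).\<close>
definition is_cochain :: "('k::field \<Rightarrow> 'v::ab_group_add \<Rightarrow> 'v) \<Rightarrow> nat \<Rightarrow> 'v cochain \<Rightarrow> bool" where
  "is_cochain sc p P \<longleftrightarrow>
     (\<forall>Xs. length Xs = p \<longrightarrow> Vector_Spaces.linear sc sc (P Xs)) \<and>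
     (\<forall>Xs x i. length Xs = p \<longrightarrow> i < p \<longrightarrow>
        Vector_Spaces.linear sc sc (\<lambda>u. P (Xs[i := (u, snd (Xs ! i))]) x) \<and>
        Vector_Spaces.linear sc sc (\<lambda>u. P (Xs[i := (fst (Xs ! i), u)]) x))"

definition is_lts_cochain :: "('k::field \<Rightarrow> 'v::ab_group_add \<Rightarrow> 'v) \<Rightarrow> nat \<Rightarrow> 'v cochain \<Rightarrow> bool" where
  "is_lts_cochain sc p P \<longleftrightarrow> is_cochain sc p P \<and>
     (\<forall>Xs a b c. length Xs + 1 = p \<longrightarrow>
        P (Xs @ [(a, a)]) b = 0 \<and>
        P (Xs @ [(a, b)]) c + P (Xs @ [(b, c)]) a + P (Xs @ [(c, a)]) b = 0)"

text \<open>(i,j)-shuffles as permutations of {0..<i+j} (0-based).\<close>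
definition shuffles :: "nat \<Rightarrow> nat \<Rightarrow> (nat \<Rightarrow> nat) set" where
  "shuffles i j = {\<sigma>. \<sigma> permutes {..<i+j} \<and> strict_mono_on {..<i} \<sigma> \<and> strict_mono_on {i..<i+j} \<sigma>}"

text \<open>P o Q for P in C^p, Q in C^q (index k below is the paper's k-1).\<close>
definition lts_comp :: "('k::field \<Rightarrow> 'v::ab_group_add \<Rightarrow> 'v) \<Rightarrow> nat \<Rightarrow> nat \<Rightarrow> 'v cochain \<Rightarrow> 'v cochain \<Rightarrow> 'v cochain" where
  "lts_comp sc p q P Q Xs x =
     (\<Sum>k<p. \<Sum>\<sigma>\<in>shuffles k q. sc ((-1) ^ (k * q) * of_int (sign \<sigma>))
        (P (map (\<lambda>j. Xs ! \<sigma> j) [0..<k]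
            @ [(Q (map (\<lambda>j. Xs ! \<sigma> j) [k..<k+q]) (fst (Xs ! (k+q))), snd (Xs ! (k+q)))]
            @ drop (k+q+1) Xs) x))
   + (\<Sum>k<p. \<Sum>\<sigma>\<in>shuffles k q. sc ((-1) ^ (k * q) * of_int (sign \<sigma>))
        (P (map (\<lambda>j. Xs ! \<sigma> j) [0..<k]
            @ [(fst (Xs ! (k+q)), Q (map (\<lambda>j. Xs ! \<sigma> j) [k..<k+q]) (snd (Xs ! (k+q))))]
            @ drop (k+q+1) Xs) x))
   + (\<Sum>\<sigma>\<in>shuffles p q. sc (of_int (sign \<sigma>))
        (P (map (\<lambda>j. Xs ! \<sigma> j) [0..<p]) (Q (map (\<lambda>j. Xs ! \<sigma> j) [p..<p+q]) x)))"

definition lts_bracket :: "('k::field \<Rightarrow> 'v::ab_group_add \<Rightarrow> 'v) \<Rightarrow> nat \<Rightarrow> nat \<Rightarrow> 'v cochain \<Rightarrow> 'v cochain \<Rightarrow> 'v cochain" where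
  "lts_bracket sc p q P Q Xs x = lts_comp sc p q P Q Xs x - sc ((-1) ^ (p * q)) (lts_comp sc q p Q P Xs x)"

definition direct_sum :: "('k::field \<Rightarrow> 'v::ab_group_add \<Rightarrow> 'v) \<Rightarrow> 'v set \<Rightarrow> 'v set \<Rightarrow> bool" where
  "direct_sum sc g1 g2 \<longleftrightarrow> module.subspace sc g1 \<and> module.subspace sc g2 \<and>
     g1 \<inter> g2 = {0} \<and> (\<forall>v. \<exists>a\<in>g1. \<exists>b\<in>g2. v = a + b)"

text \<open>Bidegree l|k of P in C^p: tested on pure tensors of homogeneous elements (slots
  x_1,y_1,...,x_p,y_p,x numbered 0..2p; S = slots taken from g1).\<close>
definition has_bidegree :: "'v::ab_group_add set \<Rightarrow> 'v set \<Rightarrow> nat \<Rightarrow> 'v cochain \<Rightarrow> int \<Rightarrow> int \<Rightarrow> bool" where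
  "has_bidegree g1 g2 p P l k \<longleftrightarrow> l + k = 2 * int p \<and>
     (\<forall>Xs x S. length Xs = p \<longrightarrow> S \<subseteq> {..<2*p+1} \<longrightarrow>
        (\<forall>i<p. fst (Xs ! i) \<in> (if 2*i \<in> S then g1 else g2) \<and>
               snd (Xs ! i) \<in> (if 2*i+1 \<in> S then g1 else g2)) \<longrightarrow>
        x \<in> (if 2*p \<in> S then g1 else g2) \<longrightarrow>
        (if int (card S) = l + 1 then P Xs x \<in> g1
         else if int (card S) = l then P Xs x \<in> g2
         else P Xs x = 0))"

end

theory Submission
  imports Defs
begin

(* In bidegree -1|l a cochain is nonzero only on tensors whose 2p+1 factors all lie in g2, and its
   values lie in g1; by multilinearity it therefore takes all its values in g1 and vanishes as soon
   as one argument lies in g1. In every term of f o g the value of g is an argument of f, so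
   f o g = 0 = g o f. Bidegree l|-1 is the same situation with the roles of g1 and g2 exchanged. *)

definition takes_values_in :: "'v set \<Rightarrow> nat \<Rightarrow> 'v cochain \<Rightarrow> bool" where
  "takes_values_in B p f \<longleftrightarrow> (\<forall>Xs x. length Xs = p \<longrightarrow> f Xs x \<in> B)"

definition vanishes_on_args :: "'v::zero set \<Rightarrow> nat \<Rightarrow> 'v cochain \<Rightarrow> bool" where
  "vanishes_on_args B p f \<longleftrightarrow>
     (\<forall>Xs x. length Xs = p \<longrightarrow> x \<in> B \<or> (\<exists>(u, v)\<in>set Xs. u \<in> B \<or> v \<in> B) \<longrightarrow> f Xs x = 0)"

lemma lts_comp_eq_0:
  assumes "vector_space sc" "vanishes_on_args B p f" "takes_values_in B q g" "length Xs = p + q"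
  shows "lts_comp sc p q f g Xs x = 0"
proof -
  have g_in_B: "g (map (\<lambda>j. Xs ! \<sigma> j) [k..<k+q]) y \<in> B" for \<sigma> k y
    using assms(3) unfolding takes_values_in_def by simp
  have f_vanishes: "f Ys y = 0" if "length Ys = p" "y \<in> B \<or> (\<exists>(u, v)\<in>set Ys. u \<in> B \<or> v \<in> B)"
    for Ys y using assms(2) that unfolding vanishes_on_args_def by blast
  have "sc c 0 = 0" for c
    using assms(1) by (simp add: module.scale_zero_right module_iff_vector_space)
  with assms(4) show ?thesis
    unfolding lts_comp_def by (simp add: f_vanishes g_in_B)
qed

lemma lts_bracket_eq_0:
  assumes "vector_space sc"
    and "takes_values_in B p f" "vanishes_on_args B p f"
    and "takes_values_in B q g" "vanishes_on_args B q g"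
    and "length Xs = p + q"
  shows "lts_bracket sc p q f g Xs x = 0"
  using assms lts_comp_eq_0[of sc B p f q g Xs x] lts_comp_eq_0[of sc B q g p f Xs x]
  by (simp add: lts_bracket_def module.scale_zero_right module_iff_vector_space)

definition slots :: "('v \<times> 'v) list \<Rightarrow> 'v \<Rightarrow> nat \<Rightarrow> 'v" where
  "slots Xs x j =
     (if j = 2 * length Xs then x else if even j then fst (Xs ! (j div 2)) else snd (Xs ! (j div 2)))"

definition on_slots :: "nat \<Rightarrow> 'v cochain \<Rightarrow> (nat \<Rightarrow> 'v) \<Rightarrow> 'v" where
  "on_slots p f s = f (map (\<lambda>i. (s (2*i), s (2*i+1))) [0..<p]) (s (2*p))"

lemma on_slots_slots: "length Xs = p \<Longrightarrow> on_slots p f (slots Xs x) = f Xs x"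
  unfolding on_slots_def slots_def by (auto intro!: arg_cong2[where f = f] nth_equalityI)

lemma ex_slot_in:
  assumes "x \<in> B \<or> (\<exists>(u, v)\<in>set Xs. u \<in> B \<or> v \<in> B)"
  shows "\<exists>j<2 * length Xs + 1. slots Xs x j \<in> B"
  using assms
proof
  assume "x \<in> B"
  then show ?thesis by (intro exI[of _ "2 * length Xs"]) (simp add: slots_def)
next
  assume "\<exists>(u, v)\<in>set Xs. u \<in> B \<or> v \<in> B"
  then obtain i where i: "i < length Xs" "fst (Xs ! i) \<in> B \<or> snd (Xs ! i) \<in> B"
    by (auto simp: in_set_conv_nth)
  from i(2) show ?thesis
  proof
    assume "fst (Xs ! i) \<in> B"
    with i(1) show ?thesis by (intro exI[of _ "2*i"]) (simp add: slots_def)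
  next
    assume "snd (Xs ! i) \<in> B"
    with i(1) show ?thesis by (intro exI[of _ "2*i+1"]) (simp add: slots_def)
  qed
qed

lemma on_slots_add:
  assumes "is_cochain sc p f" "j < 2*p+1"
  shows "on_slots p f (s(j := a + b)) = on_slots p f (s(j := a)) + on_slots p f (s(j := b))"
proof -
  define Xs where "Xs = map (\<lambda>i. (s (2*i), s (2*i+1))) [0..<p]"
  have len: "length Xs = p" by (simp add: Xs_def)
  consider "j = 2*p" | i where "i < p" "j = 2*i" | i where "i < p" "j = 2*i+1"
  proof -
    have "j = 2 * (j div 2) \<or> j = 2 * (j div 2) + 1" by presburger
    moreover have "j \<noteq> 2*p \<Longrightarrow> j div 2 < p" using assms(2) by auto
    ultimately show ?thesis using that by metis
  qed
  then show ?thesis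
  proof cases
    case 1
    have upd: "on_slots p f (s(j := c)) = f Xs c" for c
      using 1 by (auto simp: on_slots_def Xs_def intro!: arg_cong2[where f = f] map_cong)
    have lin: "Vector_Spaces.linear sc sc (f Xs)"
      using assms(1) len by (simp add: is_cochain_def)
    show ?thesis using lin by (simp add: Vector_Spaces.linear_iff upd)
  next
    case (2 i)
    have upd: "on_slots p f (s(j := c)) = f (Xs[i := (c, snd (Xs ! i))]) (s (2*p))" for c
      using 2 by (auto simp: on_slots_def Xs_def intro!: arg_cong2[where f = f] nth_equalityI
          simp: nth_list_update)
    have lin: "Vector_Spaces.linear sc sc (\<lambda>u. f (Xs[i := (u, snd (Xs ! i))]) (s (2*p)))"
      using assms(1) len 2 by (simp add: is_cochain_def)
    show ?thesis using lin by (simp add: Vector_Spaces.linear_iff upd)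
  next
    case (3 i)
    have upd: "on_slots p f (s(j := c)) = f (Xs[i := (fst (Xs ! i), c)]) (s (2*p))" for c
      using 3 by (auto simp: on_slots_def Xs_def intro!: arg_cong2[where f = f] nth_equalityI
          simp: nth_list_update)
    have lin: "Vector_Spaces.linear sc sc (\<lambda>u. f (Xs[i := (fst (Xs ! i), u)]) (s (2*p)))"
      using assms(1) len 3 by (simp add: is_cochain_def)
    show ?thesis using lin by (simp add: Vector_Spaces.linear_iff upd)
  qed
qed

lemma additive_in_slots_extend:
  fixes F :: "(nat \<Rightarrow> 'v::plus) \<Rightarrow> 'w::plus"
  assumes "finite J"
    and split: "\<And>v. \<exists>a\<in>H. \<exists>b\<in>H. v = a + b"
    and additive: "\<And>j s a b. j \<in> J \<Longrightarrow> F (s(j := a + b)) = F (s(j := a)) + F (s(j := b))"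
    and closed: "\<And>x y. C x \<Longrightarrow> C y \<Longrightarrow> C (x + y)"
    and on_H: "\<And>s. \<forall>j\<in>J. s j \<in> H \<Longrightarrow> C (F s)"
  shows "C (F s)"
  using assms(1) additive on_H
proof (induction J arbitrary: s rule: finite_induct)
  case empty
  then show ?case by blast
next
  case (insert j J)
  have "C (F t)" if "\<forall>i\<in>J. t i \<in> H" for t
  proof -
    obtain a b where ab: "a \<in> H" "b \<in> H" "t j = a + b" using split by blast
    have "C (F (t(j := c)))" if "c \<in> H" for c
      using insert.prems(2) \<open>\<forall>i\<in>J. t i \<in> H\<close> that by simp
    then have "C (F (t(j := a)) + F (t(j := b)))" using ab closed by blast
    then show ?thesis using insert.prems(1)[OF insertI1, of t a b] ab(3) by (metis fun_upd_triv)
  qed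
  then show ?case using insert.IH insert.prems(1) by blast
qed

lemma cochain_takes_values_in:
  fixes f :: "'v::ab_group_add cochain"
  assumes "is_cochain sc p f"
    and "\<And>v. \<exists>a\<in>H. \<exists>b\<in>H. v = a + b"
    and "\<And>x y. x \<in> B \<Longrightarrow> y \<in> B \<Longrightarrow> x + y \<in> B"
    and "\<And>s. \<forall>j<2*p+1. s j \<in> H \<Longrightarrow> on_slots p f s \<in> B"
  shows "takes_values_in B p f"
  unfolding takes_values_in_def
proof (intro allI impI)
  fix Xs :: "('v \<times> 'v) list" and x :: 'v
  assume "length Xs = p"
  moreover have "on_slots p f s \<in> B" for s
  proof (rule additive_in_slots_extend[where F = "on_slots p f" and C = "\<lambda>v. v \<in> B"
        and J = "{..<2*p+1}" and H = H])
    show "on_slots p f (s(j := a + b)) = on_slots p f (s(j := a)) + on_slots p f (s(j := b))"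
      if "j \<in> {..<2*p+1}" for j s a b
      using on_slots_add[OF assms(1)] that by simp
  qed (use assms(2-4) in auto)
  ultimately show "f Xs x \<in> B" by (metis on_slots_slots)
qed

lemma cochain_vanishes_on_args:
  fixes f :: "'v::ab_group_add cochain"
  assumes "is_cochain sc p f"
    and "\<And>v. \<exists>a\<in>H. \<exists>b\<in>H. v = a + b"
    and "B \<subseteq> H"
    and "\<And>s. \<forall>j<2*p+1. s j \<in> H \<Longrightarrow> \<exists>j<2*p+1. s j \<in> B \<Longrightarrow> on_slots p f s = 0"
  shows "vanishes_on_args B p f"
  unfolding vanishes_on_args_def
proof (intro allI impI)
  fix Xs :: "('v \<times> 'v) list" and x :: 'v
  assume len: "length Xs = p" and "x \<in> B \<or> (\<exists>(u, v)\<in>set Xs. u \<in> B \<or> v \<in> B)"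
  then obtain j0 where j0: "j0 < 2*p+1" "slots Xs x j0 \<in> B"
    using ex_slot_in[of x B Xs] by auto
  define b0 where "b0 = slots Xs x j0"
  \<comment> \<open>Keep slot j0 fixed at its value in B and expand only the other slots.\<close>
  have "on_slots p f ((slots Xs x)(j0 := b0)) = 0"
  proof (rule additive_in_slots_extend[where F = "\<lambda>s. on_slots p f (s(j0 := b0))"
        and C = "\<lambda>v. v = 0" and J = "{..<2*p+1} - {j0}" and H = H])
    show "on_slots p f (s(j := a + b, j0 := b0)) =
          on_slots p f (s(j := a, j0 := b0)) + on_slots p f (s(j := b, j0 := b0))"
      if "j \<in> {..<2*p+1} - {j0}" for j s a b
      using on_slots_add[OF assms(1), of j "s(j0 := b0)" a b] that by (simp add: fun_upd_twist)
    show "on_slots p f (s(j0 := b0)) = 0" if "\<forall>j\<in>{..<2*p+1} - {j0}. s j \<in> H" for s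
    proof (rule assms(4))
      show "\<forall>j<2*p+1. (s(j0 := b0)) j \<in> H" using that j0(2) assms(3) by (auto simp: b0_def)
      show "\<exists>j<2*p+1. (s(j0 := b0)) j \<in> B" using j0 by (auto simp: b0_def)
    qed
  qed (use assms(2) in auto)
  then show "f Xs x = 0" using len by (simp add: b0_def on_slots_slots)
qed

lemma has_bidegree_swap:
  assumes "has_bidegree g1 g2 p f l k"
  shows "has_bidegree g2 g1 p f k l"
  unfolding has_bidegree_def
proof (intro conjI allI impI)
  have lk: "l + k = 2 * int p" using assms by (simp add: has_bidegree_def)
  then show "k + l = 2 * int p" by simp
  fix Xs x S assume len: "length Xs = p" and S: "S \<subseteq> {..<2*p+1}"
    and args: "\<forall>i<p. fst (Xs ! i) \<in> (if 2*i \<in> S then g2 else g1) \<and>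
                  snd (Xs ! i) \<in> (if 2*i+1 \<in> S then g2 else g1)"
    and x: "x \<in> (if 2*p \<in> S then g2 else g1)"
  define T where "T = {..<2*p+1} - S"
  have T: "T \<subseteq> {..<2*p+1}" by (simp add: T_def)
  have "card S \<le> 2*p+1" using card_mono[OF _ S] by simp
  then have "int (card T) = 2 * int p + 1 - int (card S)"
    using S finite_subset[OF S] by (simp add: T_def card_Diff_subset of_nat_diff)
  moreover have "\<forall>i<p. fst (Xs ! i) \<in> (if 2*i \<in> T then g1 else g2) \<and>
                  snd (Xs ! i) \<in> (if 2*i+1 \<in> T then g1 else g2)"
    using args by (auto simp: T_def)
  moreover have "x \<in> (if 2*p \<in> T then g1 else g2)" using x by (auto simp: T_def)
  ultimately have "if int (card T) = l + 1 then f Xs x \<in> g1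
         else if int (card T) = l then f Xs x \<in> g2 else f Xs x = 0"
    using assms len T unfolding has_bidegree_def by blast
  then show "if int (card S) = k + 1 then f Xs x \<in> g2
         else if int (card S) = k then f Xs x \<in> g1 else f Xs x = 0"
    using \<open>int (card T) = _\<close> lk by (auto split: if_splits)
qed

lemma has_bidegree_on_slots:
  assumes "has_bidegree g1 g2 p f l k" "S \<subseteq> {..<2*p+1}"
    and "\<forall>j<2*p+1. s j \<in> (if j \<in> S then g1 else g2)"
  shows "if int (card S) = l + 1 then on_slots p f s \<in> g1
         else if int (card S) = l then on_slots p f s \<in> g2 else on_slots p f s = 0"
  using assms(3) assms(1,2)[unfolded has_bidegree_def]
  by (auto simp: on_slots_def)

lemma has_bidegree_minus1_on_slots:
  assumes "has_bidegree B A p f (-1) l" "0 \<in> B" "\<forall>j<2*p+1. s j \<in> A \<union> B"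
  shows "on_slots p f s \<in> B" and "\<exists>j<2*p+1. s j \<in> B \<Longrightarrow> on_slots p f s = 0"
proof -
  define S where "S = {j. j < 2*p+1 \<and> s j \<in> B}"
  have "S \<subseteq> {..<2*p+1}" by (auto simp: S_def)
  moreover have "\<forall>j<2*p+1. s j \<in> (if j \<in> S then B else A)" using assms(3) by (auto simp: S_def)
  ultimately have by_card: "if card S = 0 then on_slots p f s \<in> B else on_slots p f s = 0"
    using has_bidegree_on_slots[OF assms(1)] by fastforce
  then show "on_slots p f s \<in> B" using assms(2) by (auto split: if_splits)
  assume "\<exists>j<2*p+1. s j \<in> B"
  then have "card S \<noteq> 0" by (auto simp: S_def)
  then show "on_slots p f s = 0" using by_card by simp
qed

lemma direct_sum_swap: "direct_sum sc g1 g2 \<Longrightarrow> direct_sum sc g2 g1"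
  unfolding direct_sum_def by (metis add.commute inf_commute)

lemma has_bidegree_minus1_takes_values_vanishes:
  assumes "vector_space sc" "direct_sum sc B A" "is_cochain sc p f" "has_bidegree B A p f (-1) l"
  shows "takes_values_in B p f" and "vanishes_on_args B p f"
proof -
  have "module sc" using assms(1) by (simp add: module_iff_vector_space)
  moreover have "module.subspace sc B" using assms(2) by (simp add: direct_sum_def)
  ultimately have zero: "0 \<in> B" and add: "\<And>x y. x \<in> B \<Longrightarrow> y \<in> B \<Longrightarrow> x + y \<in> B"
    by (blast intro: module.subspace_0 module.subspace_add)+
  have split: "\<exists>a\<in>A \<union> B. \<exists>b\<in>A \<union> B. v = a + b" for v
    using assms(2) unfolding direct_sum_def by blast
  show "takes_values_in B p f"
    using assms(3) split add has_bidegree_minus1_on_slots(1)[OF assms(4) zero]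
    by (rule cochain_takes_values_in)
  show "vanishes_on_args B p f"
    using assms(3) split _ has_bidegree_minus1_on_slots(2)[OF assms(4) zero]
    by (rule cochain_vanishes_on_args) blast
qed

theorem lemma3p3:
  fixes sc :: "'k::field_char_0 \<Rightarrow> 'v::ab_group_add \<Rightarrow> 'v"
    and g1 g2 :: "'v set" and f g :: "'v cochain" and p q :: nat and l k :: int
  assumes "vector_space sc"
    and "direct_sum sc g1 g2"
    and "is_lts_cochain sc p f"
    and "is_lts_cochain sc q g"
    and "(has_bidegree g1 g2 p f (-1) l \<and> has_bidegree g1 g2 q g (-1) k) \<or>
         (has_bidegree g1 g2 p f l (-1) \<and> has_bidegree g1 g2 q g k (-1))"
  shows "\<forall>Xs x. length Xs = p + q \<longrightarrow> lts_bracket sc p q f g Xs x = 0"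
proof -
  have cochains: "is_cochain sc p f" "is_cochain sc q g"
    using assms(3,4) by (simp_all add: is_lts_cochain_def)
  obtain B A l' k' where "direct_sum sc B A"
    and "has_bidegree B A p f (-1) l'" "has_bidegree B A q g (-1) k'"
    using assms(2,5) direct_sum_swap has_bidegree_swap by metis
  with assms(1) cochains show ?thesis
    by (metis has_bidegree_minus1_takes_values_vanishes lts_bracket_eq_0)
qed

end
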